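(* Let $q$ be a prime power, $d$ a positive divisor of $q-1$, $m=\frac{q-1}{d}$, $C$ the index $d$ subgroup of $\mathbb{F}_q^{\ast}$, and $\omega$ a primitive root of $\mathbb{F}_q$; put $C_i=\omega^iC$. Then $\operatorname{GCP}(d,q)$ is isomorphic as a permutation group to $\operatorname{Hol}(C)\wr_{\mathrm{imp}}\operatorname{Sym}(d)$. More precisely, let $\beta_\omega:C\times\{0,\dots,d-1\}\to\mathbb{F}_q^{\ast}$, $(c,i)\mapsto c\omega^i$, and let $\iota_\omega$ map the wreath product element $(\psi,(\lambda(s_i,b_i))_{i=0,\dots,d-1})$ to the restriction to $\mathbb{F}_q^{\ast}$ of $$f_\omega\big((\omega^{\psi(i)-is_{\psi(i)}}b_{\psi(i)})_{i=0,\dots,d-1},\,(s_{\psi(i)})_{i=0,\dots,d-1}\big)$$ (with exponents $s_{\psi(i)}$ taken as representatives in $\{1,\dots,m\}$). Then $\beta_\omega$ is a bijection, $\iota_\omega$ is a group isomorphism onto $\operatorname{GCP}(d,q)$, and $\beta_\omega(x^g)=\beta_\omega(x)^{\iota_\omega(g)}$ for all $g$ and all $x\in C\times\{0,\dots,d-1\}$. The inverse of $\iota_\omega$ sends $f_\omega(\vec a,\vec r)_{\mid\mathbb{F}_q^{\ast}}\in\operatorname{GCP}(d,q)$ to $$\big(\psi,(\lambda(r_{\psi^{-1}(i)},\,\omega^{r_{\psi^{-1}(i)}\psi^{-1}(i)-i}a_{\psi^{-1}(i)}))_{i=0,\dots,d-1}\big),$$ where $\psi\in\operatorname{Sym}(d)$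 is the unique permutation with $f_\omega(\vec a,\vec r)(C_i)=C_{\psi(i)}$ for all $i$. Moreover: (1) $\iota_\omega^{-1}(\operatorname{CP}(d,q))$ is the set of all elements $(\psi,(\lambda(s,b_i))_{i})$ with $\psi\in\operatorname{Sym}(d)$, $s$ an integer coprime to $m$ (the same for all $i$), and $b_0,\dots,b_{d-1}\in C$; (2) $\iota_\omega^{-1}(\operatorname{FOCP}(d,q))$ is the set of all elements $(\psi,(\lambda(1,b_i))_i)$ with $\psi\in\operatorname{Sym}(d)$ and $b_i\in C$, i.e. the subgroup $C_{\mathrm{reg}}\wr_{\mathrm{imp}}\operatorname{Sym}(d)$, where $C_{\mathrm{reg}}=\{\lambda(1,c):c\in C\}$.
   Context: Groups act on the right: for permutations $\sigma,\psi$, the product $\sigma\psi$ means "apply $\sigma$ first, then $\psi$". For $\vec a=(a_0,\dots,a_{d-1})\in\mathbb{F}_q^d$ and $\vec r=(r_0,\dots,r_{d-1})\in\{1,\dots,m\}^d$, $f_\omega(\vec a,\vec r):\mathbb{F}_q\to\mathbb{F}_q$ is the map with $0\mapsto 0$ and $x\mapsto a_ix^{r_i}$ for $x\in C_i$ (an "index $d$ generalized cyclotomic mapping"); if all $r_i$ equal a common $r$ it is an "$r$-th order cyclotomic mapping", and "first-order" if $r=1$. $\operatorname{GCP}(d,q)$ (resp. $\operatorname{CP}(d,q)$, $\operatorname{FOCP}(d,q)$) is the permutation group on $\mathbb{F}_q^{\ast}$ consisting of restrictions to $\mathbb{F}_q^{\ast}$ of those index $d$ generalized cyclotomic mappings (resp.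 $r$-th order cyclotomic mappings for some $r$, resp. first-order cyclotomic mappings) that are permutations of $\mathbb{F}_q$. $\operatorname{Hol}(C)$ is the permutation group on $C$ of all maps $\lambda(r,a):c\mapsto ac^r$ with $a\in C$ and $r$ an integer coprime to $|C|=m$. For a permutation group $G\le\operatorname{Sym}(\Omega)$, $\operatorname{Sym}(d)$ denotes the symmetric group on $\{0,\dots,d-1\}$, and $G\wr_{\mathrm{imp}}\operatorname{Sym}(d)$ is the permutation group on $\Omega\times\{0,\dots,d-1\}$ whose elements are pairs $(\sigma,(g_0,\dots,g_{d-1}))$ with $\sigma\in\operatorname{Sym}(d)$, $g_i\in G$, acting by $(x,i)\mapsto(g_{\sigma(i)}(x),\sigma(i))$. An isomorphism of permutation groups $G\le\operatorname{Sym}(\Omega)\to H\le\operatorname{Sym}(\Lambda)$ is a pair $(\beta,\iota)$ with $\beta:\Omega\to\Lambda$ a bijection and $\iota:G\to H$ a group isomorphism with $\beta(x^g)=\beta(x)^{\iota(g)}$. *)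

theory Defs
  imports "HOL-Algebra.Group" "HOL-Combinatorics.Permutations"
begin

text \<open>Conventions: the finite field F_q is a type 'a of class field and finite, q = card (UNIV :: 'a set).
  Permutations of F_q^* are represented by maps 'a => 'a (fixing 0); permutations of C
  are represented by maps 'a => 'a that are the identity outside C.
  Groups act on the right: the product f * g means "apply f first, then g".\<close>

definition primitive_root :: "'a::{field,finite} \<Rightarrow> bool" where
  "primitive_root w \<longleftrightarrow> w \<noteq> 0 \<and> (\<forall>x. x \<noteq> 0 \<longrightarrow> (\<exists>k::nat. x = w ^ k))"

definition subgrpC :: "nat \<Rightarrow> 'a::{field,finite} set" where
  "subgrpC d = {x ^ d | x. x \<noteq> (0::'a)}"

definition cyc_coset :: "'a::{field,finite} \<Rightarrow> nat \<Rightarrow> nat \<Rightarrow> 'a set" where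
  "cyc_coset w d i = (\<lambda>c. w ^ i * c) ` subgrpC d"

definition cidx :: "'a::{field,finite} \<Rightarrow> nat \<Rightarrow> 'a \<Rightarrow> nat" where
  "cidx w d x = (THE i. i < d \<and> x \<in> cyc_coset w d i)"

definition gen_cyc_map :: "'a::{field,finite} \<Rightarrow> nat \<Rightarrow> (nat \<Rightarrow> 'a) \<Rightarrow> (nat \<Rightarrow> nat) \<Rightarrow> 'a \<Rightarrow> 'a" where
  "gen_cyc_map w d a r = (\<lambda>x. if x = 0 then 0 else a (cidx w d x) * x ^ r (cidx w d x))"

definition GCP :: "'a::{field,finite} \<Rightarrow> nat \<Rightarrow> ('a \<Rightarrow> 'a) set" where
  "GCP w d = {gen_cyc_map w d a r | a r.
      (\<forall>i<d. r i \<in> {1..(card (UNIV :: 'a set) - 1) div d}) \<and> bij (gen_cyc_map w d a r)}"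

definition CP :: "'a::{field,finite} \<Rightarrow> nat \<Rightarrow> ('a \<Rightarrow> 'a) set" where
  "CP w d = {gen_cyc_map w d a r | a r.
      (\<forall>i<d. r i \<in> {1..(card (UNIV :: 'a set) - 1) div d}) \<and> (\<exists>\<rho>. \<forall>i<d. r i = \<rho>)
      \<and> bij (gen_cyc_map w d a r)}"

definition FOCP :: "'a::{field,finite} \<Rightarrow> nat \<Rightarrow> ('a \<Rightarrow> 'a) set" where
  "FOCP w d = {gen_cyc_map w d a r | a r. (\<forall>i<d. r i = 1) \<and> bij (gen_cyc_map w d a r)}"

definition perm_grp :: "('b \<Rightarrow> 'b) set \<Rightarrow> ('b \<Rightarrow> 'b) monoid" where
  "perm_grp S = \<lparr>carrier = S, monoid.mult = (\<lambda>f g. g \<circ> f), monoid.one = id\<rparr>"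

definition hol_map :: "'a::field set \<Rightarrow> int \<Rightarrow> 'a \<Rightarrow> 'a \<Rightarrow> 'a" where
  "hol_map C s b = (\<lambda>c. if c \<in> C then b * c powi s else c)"

definition Hol :: "'a::field set \<Rightarrow> nat \<Rightarrow> ('a \<Rightarrow> 'a) set" where
  "Hol C m = {hol_map C s b | s b. b \<in> C \<and> coprime s (int m)}"

definition wr_carrier :: "('b \<Rightarrow> 'b) set \<Rightarrow> nat \<Rightarrow> ((nat \<Rightarrow> nat) \<times> (nat \<Rightarrow> 'b \<Rightarrow> 'b)) set" where
  "wr_carrier G d = {(\<sigma>, g). \<sigma> permutes {..<d} \<and> (\<forall>i<d. g i \<in> G) \<and> (\<forall>i. d \<le> i \<longrightarrow> g i = id)}"

fun wr_act :: "(nat \<Rightarrow> nat) \<times> (nat \<Rightarrow> 'b \<Rightarrow> 'b) \<Rightarrow> 'b \<times> nat \<Rightarrow> 'b \<times> nat" where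
  "wr_act (\<sigma>, g) (x, i) = (g (\<sigma> i) x, \<sigma> i)"

text \<open>Product "apply (sigma,g) first, then (tau,h)".\<close>
fun wr_mult :: "nat \<Rightarrow> (nat \<Rightarrow> nat) \<times> (nat \<Rightarrow> 'b \<Rightarrow> 'b) \<Rightarrow> (nat \<Rightarrow> nat) \<times> (nat \<Rightarrow> 'b \<Rightarrow> 'b)
    \<Rightarrow> (nat \<Rightarrow> nat) \<times> (nat \<Rightarrow> 'b \<Rightarrow> 'b)" where
  "wr_mult d (\<sigma>, g) (\<tau>, h) =
     (\<tau> \<circ> \<sigma>, \<lambda>j. if j < d then h j \<circ> g (inv_into {..<d} \<tau> j) else id)"

definition wr_group :: "('b \<Rightarrow> 'b) set \<Rightarrow> nat \<Rightarrow> ((nat \<Rightarrow> nat) \<times> (nat \<Rightarrow> 'b \<Rightarrow> 'b)) monoid" where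
  "wr_group G d = \<lparr>carrier = wr_carrier G d, monoid.mult = wr_mult d, monoid.one = (id, \<lambda>_. id)\<rparr>"

fun beta :: "'a::{field,finite} \<Rightarrow> 'a \<times> nat \<Rightarrow> 'a" where
  "beta w (c, i) = c * w ^ i"

definition hol_param :: "'a::field set \<Rightarrow> nat \<Rightarrow> ('a \<Rightarrow> 'a) \<Rightarrow> nat \<times> 'a" where
  "hol_param C m g = (SOME (s, b). s \<in> {1..m} \<and> b \<in> C \<and> g = hol_map C (int s) b)"

fun iota :: "'a::{field,finite} \<Rightarrow> nat \<Rightarrow> (nat \<Rightarrow> nat) \<times> (nat \<Rightarrow> 'a \<Rightarrow> 'a) \<Rightarrow> 'a \<Rightarrow> 'a" where
  "iota w d (\<psi>, g) =
     (let C = subgrpC d; m = (card (UNIV :: 'a set) - 1) div d;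
          s = (\<lambda>j. fst (hol_param C m (g j))); b = (\<lambda>j. snd (hol_param C m (g j)))
      in gen_cyc_map w d
           (\<lambda>i. w powi (int (\<psi> i) - int i * int (s (\<psi> i))) * b (\<psi> i))
           (\<lambda>i. s (\<psi> i)))"

text \<open>The claimed inverse image of f_w(a, r), given the permutation psi of the cosets.\<close>
definition iota_inv_formula :: "'a::{field,finite} \<Rightarrow> nat \<Rightarrow> (nat \<Rightarrow> nat) \<Rightarrow> (nat \<Rightarrow> 'a) \<Rightarrow> (nat \<Rightarrow> nat)
    \<Rightarrow> (nat \<Rightarrow> nat) \<times> (nat \<Rightarrow> 'a \<Rightarrow> 'a)" where
  "iota_inv_formula w d \<psi> a r =
     (\<psi>, \<lambda>i. if i < d then
               (let j = inv_into {..<d} \<psi> i in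
                 hol_map (subgrpC d) (int (r j)) (w powi (int (r j) * int j - int i) * a j))
             else id)"

end

theory Submission
  imports Defs "HOL-Number_Theory.Cong"
begin

text \<open>Every nonzero field element is uniquely c w^i with c in C and i < d; this is beta.
  On the coset C_i the map f = f_w(a, r) sends c w^i to f(w^i) c^(r_i). Hence if f is a
  permutation, the nonzero value f(w^i) lies in some coset C_psi(i), f maps C_i onto it and,
  transported back to C by beta, acts there as the element lambda(r_i, b) of Hol(C);
  injectivity on C_i forces r_i to be coprime to m. Conversely a wreath product element
  (psi, (g_j)) acts through iota by c w^i |-> g_psi(i)(c) w^psi(i), which gives the
  homomorphism property, injectivity and the equivariance of beta at once, while the
  description of f gives the inverse.\<close>

subsection \<open>Imprimitive wreath products\<close>

lemma mem_wr_carrier_iff: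
  "(\<sigma>, g) \<in> wr_carrier G d \<longleftrightarrow> \<sigma> permutes {..<d} \<and> (\<forall>i<d. g i \<in> G) \<and> (\<forall>i. d \<le> i \<longrightarrow> g i = id)"
  by (simp add: wr_carrier_def)

lemma permutes_lessThan_less:
  "\<sigma> permutes {..<d} \<Longrightarrow> i < d \<Longrightarrow> \<sigma> i < d"
  using permutes_in_image[of \<sigma> "{..<d}" i] by simp

lemma permutes_lessThan_inv_into:
  assumes "\<sigma> permutes {..<d}" and "j < d"
  shows "inv_into {..<d} \<sigma> j = Hilbert_Choice.inv \<sigma> j"
proof (rule inv_into_f_eq)
  show "inj_on \<sigma> {..<d}" using assms(1) by (rule permutes_inj_on)
  show "Hilbert_Choice.inv \<sigma> j \<in> {..<d}"
    using permutes_lessThan_less[OF permutes_inv[OF assms(1)] assms(2)] by simp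
  show "\<sigma> (Hilbert_Choice.inv \<sigma> j) = j" using assms(1) by (rule permutes_inverses)
qed

lemma wr_mult_permutes:
  assumes "\<tau> permutes {..<d}"
  shows "wr_mult d (\<sigma>, g) (\<tau>, h)
    = (\<tau> \<circ> \<sigma>, \<lambda>j. if j < d then h j \<circ> g (Hilbert_Choice.inv \<tau> j) else id)"
  by (auto simp: fun_eq_iff permutes_lessThan_inv_into[OF assms])

lemma wr_mult_assoc:
  assumes \<tau>: "\<tau> permutes {..<d}" and \<rho>: "\<rho> permutes {..<d}"
  shows "wr_mult d (wr_mult d (\<sigma>, g) (\<tau>, h)) (\<rho>, k)
    = wr_mult d (\<sigma>, g) (wr_mult d (\<tau>, h) (\<rho>, k))"
proof -
  have "Hilbert_Choice.inv (\<rho> \<circ> \<tau>) = Hilbert_Choice.inv \<tau> \<circ> Hilbert_Choice.inv \<rho>"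
    using o_inv_distrib permutes_bij[OF \<rho>] permutes_bij[OF \<tau>] by blast
  moreover have "Hilbert_Choice.inv \<rho> j < d" if "j < d" for j
    using permutes_lessThan_less[OF permutes_inv[OF \<rho>] that] .
  ultimately show ?thesis
    by (simp add: wr_mult_permutes \<tau> \<rho> permutes_compose fun_eq_iff del: wr_mult.simps)
qed

lemma group_perm_grpI:
  assumes "id \<in> G" and "\<And>f g. f \<in> G \<Longrightarrow> g \<in> G \<Longrightarrow> f \<circ> g \<in> G"
    and "\<And>f. f \<in> G \<Longrightarrow> \<exists>g\<in>G. f \<circ> g = id"
  shows "group (perm_grp G)"
  by (rule groupI) (auto simp: perm_grp_def o_assoc assms)

lemma group_wr_group:
  assumes "group (perm_grp G)"
  shows "group (wr_group G d)"
proof -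
  interpret P: group "perm_grp G" by fact
  have closed: "f \<circ> g \<in> G" if "f \<in> G" "g \<in> G" for f g
    using P.m_closed[of g f] that by (simp add: perm_grp_def)
  have inverse: "inv\<^bsub>perm_grp G\<^esub> f \<in> G \<and> f \<circ> inv\<^bsub>perm_grp G\<^esub> f = id" if "f \<in> G" for f
    using P.inv_closed[of f] P.l_inv[of f] that by (simp add: perm_grp_def)
  show ?thesis
  proof (rule groupI)
    fix x y assume "x \<in> carrier (wr_group G d)" "y \<in> carrier (wr_group G d)"
    then obtain \<sigma> g \<tau> h where "x = (\<sigma>, g)" "y = (\<tau>, h)"
      "(\<sigma>, g) \<in> wr_carrier G d" "(\<tau>, h) \<in> wr_carrier G d"
      by (cases x, cases y) (auto simp: wr_group_def)
    then show "x \<otimes>\<^bsub>wr_group G d\<^esub> y \<in> carrier (wr_group G d)"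
      by (auto simp: wr_group_def mem_wr_carrier_iff wr_mult_permutes permutes_compose closed
          intro!: permutes_lessThan_less[OF permutes_inv] simp del: wr_mult.simps)
  next
    show "\<one>\<^bsub>wr_group G d\<^esub> \<in> carrier (wr_group G d)"
      using P.one_closed by (simp add: wr_group_def mem_wr_carrier_iff perm_grp_def)
  next
    fix x y z assume "x \<in> carrier (wr_group G d)" "y \<in> carrier (wr_group G d)" "z \<in> carrier (wr_group G d)"
    then show "x \<otimes>\<^bsub>wr_group G d\<^esub> y \<otimes>\<^bsub>wr_group G d\<^esub> z = x \<otimes>\<^bsub>wr_group G d\<^esub> (y \<otimes>\<^bsub>wr_group G d\<^esub> z)"
      by (cases x, cases y, cases z) (simp add: wr_group_def mem_wr_carrier_iff wr_mult_assoc del: wr_mult.simps)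
  next
    fix x assume "x \<in> carrier (wr_group G d)"
    then show "\<one>\<^bsub>wr_group G d\<^esub> \<otimes>\<^bsub>wr_group G d\<^esub> x = x"
      by (cases x) (auto simp: wr_group_def mem_wr_carrier_iff fun_eq_iff)
  next
    fix x assume "x \<in> carrier (wr_group G d)"
    then obtain \<sigma> g where x: "x = (\<sigma>, g)" and \<sigma>: "\<sigma> permutes {..<d}"
      and g: "\<forall>i<d. g i \<in> G" "\<forall>i. d \<le> i \<longrightarrow> g i = id"
      by (cases x) (auto simp: wr_group_def mem_wr_carrier_iff)
    let ?y = "(Hilbert_Choice.inv \<sigma>, \<lambda>k. if k < d then inv\<^bsub>perm_grp G\<^esub> (g (\<sigma> k)) else id)"
    have "?y \<in> wr_carrier G d"
      using g inverse permutes_lessThan_less[OF \<sigma>] by (simp add: mem_wr_carrier_iff permutes_inv[OF \<sigma>])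
    moreover have "wr_mult d ?y x = (id, \<lambda>_. id)"
      using g inverse permutes_lessThan_less[OF permutes_inv[OF \<sigma>]]
      by (auto simp: x wr_mult_permutes[OF \<sigma>] permutes_inv_o[OF \<sigma>] permutes_inverses[OF \<sigma>] fun_eq_iff
          simp del: wr_mult.simps)
    ultimately show "\<exists>y\<in>carrier (wr_group G d). y \<otimes>\<^bsub>wr_group G d\<^esub> x = \<one>\<^bsub>wr_group G d\<^esub>"
      by (auto simp: wr_group_def)
  qed
qed

lemma subgroup_wr_carrier:
  assumes G: "group (perm_grp G)" and H: "subgroup H (perm_grp G)"
  shows "subgroup (wr_carrier H d) (wr_group G d)"
proof (rule group.group_incl_imp_subgroup[OF group_wr_group[OF G]])
  have "H \<subseteq> G" using subgroup.subset[OF H] by (simp add: perm_grp_def)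
  then show "wr_carrier H d \<subseteq> carrier (wr_group G d)"
    by (auto simp: wr_group_def wr_carrier_def)
  have "group (perm_grp H)"
    using subgroup.subgroup_is_group[OF H G] by (simp add: perm_grp_def)
  then show "group ((wr_group G d)\<lparr>carrier := wr_carrier H d\<rparr>)"
    using group_wr_group by (simp add: wr_group_def)
qed

lemma wr_mult_mem_wr_carrier:
  assumes "group (perm_grp G)" "x \<in> wr_carrier G d" "y \<in> wr_carrier G d"
  shows "wr_mult d x y \<in> wr_carrier G d"
  using monoid.m_closed[OF group.is_monoid[OF group_wr_group[OF assms(1), of d]], of x y] assms(2,3)
  by (simp add: wr_group_def)

subsection \<open>Powers of a primitive root\<close>

lemma card_field_minus_one_pos: "0 < card (UNIV :: 'a::{field,finite} set) - 1"
proof -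
  have "card {0, 1::'a} \<le> card (UNIV :: 'a set)" by (rule card_mono) simp_all
  then show ?thesis by simp
qed

lemma nonzero_power_card_minus_one:
  fixes x :: "'a::{field,finite}"
  assumes "x \<noteq> 0"
  shows "x ^ (card (UNIV :: 'a set) - 1) = 1"
proof -
  let ?U = "UNIV - {0::'a}"
  have "(\<Prod>y\<in>?U. x * y) = (\<Prod>y\<in>?U. y)"
    by (rule prod.reindex_bij_witness[of _ "\<lambda>y. y / x" "\<lambda>y. x * y"]) (use assms in auto)
  moreover have "(\<Prod>y\<in>?U. x * y) = x ^ card ?U * (\<Prod>y\<in>?U. y)"
    by (simp add: prod.distrib)
  moreover have "(\<Prod>y\<in>?U. y) \<noteq> 0" by simp
  ultimately show ?thesis by (simp add: card_Diff_singleton)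
qed

lemma primitive_root_power_eq_iff:
  fixes w :: "'a::{field,finite}"
  assumes "primitive_root w"
  shows "w ^ a = w ^ b \<longleftrightarrow> a mod (card (UNIV :: 'a set) - 1) = b mod (card (UNIV :: 'a set) - 1)"
proof -
  define n where "n = card (UNIV :: 'a set) - 1"
  have power_mod: "w ^ k = w ^ (k mod n)" for k
  proof -
    have "w ^ k = (w ^ n) ^ (k div n) * w ^ (k mod n)"
      by (simp flip: power_mult power_add)
    moreover have "w \<noteq> 0" using assms by (simp add: primitive_root_def)
    then have "w ^ n = 1" unfolding n_def by (rule nonzero_power_card_minus_one)
    ultimately show ?thesis by simp
  qed
  have "(\<lambda>k. w ^ k) ` {..<n} = UNIV - {0}"
  proof
    show "(\<lambda>k. w ^ k) ` {..<n} \<subseteq> UNIV - {0}" using assms by (auto simp: primitive_root_def)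
    show "UNIV - {0} \<subseteq> (\<lambda>k. w ^ k) ` {..<n}"
    proof
      fix x :: 'a assume "x \<in> UNIV - {0}"
      then obtain k where "x = w ^ k" using assms by (auto simp: primitive_root_def)
      moreover have "k mod n < n" using card_field_minus_one_pos[where 'a='a] by (simp add: n_def)
      ultimately show "x \<in> (\<lambda>k. w ^ k) ` {..<n}" using power_mod by blast
    qed
  qed
  then have "inj_on (\<lambda>k. w ^ k) {..<n}"
    by (intro eq_card_imp_inj_on) (simp_all add: card_Diff_singleton n_def)
  then have "w ^ (a mod n) = w ^ (b mod n) \<longleftrightarrow> a mod n = b mod n"
    using card_field_minus_one_pos[where 'a='a] by (auto simp: n_def inj_on_eq_iff)
  then show ?thesis using power_mod by (simp add: n_def)
qed

lemma eq_if_mod_eq_atLeastAtMost: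
  fixes a b m :: nat
  assumes "a \<in> {1..m}" "b \<in> {1..m}" "a mod m = b mod m"
  shows "a = b"
  using assms by (cases "a = m"; cases "b = m") auto

subsection \<open>The cosets of C and generalized cyclotomic mappings\<close>

declare iota.simps [simp del]

locale cyclotomic_cosets =
  fixes w :: "'a::{field,finite}" and d n m :: nat and C :: "'a set"
  assumes d_pos: "0 < d" and n_def: "n = card (UNIV :: 'a set) - 1" and d_dvd_n: "d dvd n"
    and m_def: "m = n div d" and C_def: "C = subgrpC d" and primitive: "primitive_root w"
begin

lemma w_nonzero [simp]: "w \<noteq> 0"
  using primitive by (simp add: primitive_root_def)

lemma power_w_eq_iff: "w ^ a = w ^ b \<longleftrightarrow> a mod n = b mod n"
  using primitive_root_power_eq_iff[OF primitive] by (simp add: n_def)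

lemma nonzero_eq_power_w: "x \<noteq> 0 \<Longrightarrow> \<exists>k. x = w ^ k"
  using primitive by (auto simp: primitive_root_def)

lemma d_mult_m: "d * m = n"
  using d_dvd_n by (simp add: m_def)

lemma m_pos: "0 < m"
  using d_mult_m card_field_minus_one_pos[where 'a='a] n_def by (metis mult_0_right neq0_conv)

lemma mem_C_iff: "x \<in> C \<longleftrightarrow> (\<exists>k. x = w ^ (d * k))"
proof
  assume "x \<in> C"
  then obtain y where "x = y ^ d" "y \<noteq> 0" by (auto simp: C_def subgrpC_def)
  then show "\<exists>k. x = w ^ (d * k)"
    using nonzero_eq_power_w by (metis mult.commute power_mult)
next
  assume "\<exists>k. x = w ^ (d * k)"
  then obtain k where "x = (w ^ k) ^ d" by (metis mult.commute power_mult)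
  then show "x \<in> C" by (auto simp: C_def subgrpC_def)
qed

lemma power_w_mem_C_iff: "w ^ j \<in> C \<longleftrightarrow> d dvd j"
proof
  assume "w ^ j \<in> C"
  then obtain k where "w ^ j = w ^ (d * k)" by (auto simp: mem_C_iff)
  then have "j mod n mod d = d * k mod n mod d" by (simp add: power_w_eq_iff)
  then show "d dvd j" by (simp add: mod_mod_cancel[OF d_dvd_n] dvd_eq_mod_eq_0)
qed (auto simp: mem_C_iff)

lemma C_nonzero: "c \<in> C \<Longrightarrow> c \<noteq> 0"
  by (auto simp: mem_C_iff)

lemma one_mem_C: "1 \<in> C"
  using power_w_mem_C_iff[of 0] by simp

lemma w_power_d_mem_C: "w ^ d \<in> C"
  by (simp add: power_w_mem_C_iff)

lemma C_mult_closed: "a \<in> C \<Longrightarrow> b \<in> C \<Longrightarrow> a * b \<in> C"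
  by (auto simp: mem_C_iff simp flip: power_add distrib_left)

lemma C_power_closed: "c \<in> C \<Longrightarrow> c ^ k \<in> C"
  by (induction k) (auto simp: one_mem_C C_mult_closed)

lemma C_power_m: "c \<in> C \<Longrightarrow> c ^ m = 1"
proof -
  assume "c \<in> C"
  then obtain k where "c = w ^ (d * k)" by (auto simp: mem_C_iff)
  then have "c ^ m = (w ^ n) ^ k"
    by (simp flip: power_mult d_mult_m add: ac_simps)
  then show ?thesis using power_w_eq_iff[of n 0] by simp
qed

lemma C_inverse_closed: "c \<in> C \<Longrightarrow> inverse c \<in> C"
proof -
  assume c: "c \<in> C"
  have "c * c ^ (m - 1) = 1"
    using C_power_m[OF c] m_pos by (simp flip: power_Suc)
  then have "inverse c = c ^ (m - 1)" by (rule inverse_unique)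
  then show ?thesis using C_power_closed c by simp
qed

lemma C_powi_closed: "c \<in> C \<Longrightarrow> c powi s \<in> C"
  by (cases "s \<ge> 0") (auto simp: power_int_def C_power_closed C_inverse_closed)

lemma C_powi_mod: "c \<in> C \<Longrightarrow> c powi s = c powi (s mod int m)"
proof -
  assume c: "c \<in> C"
  have "c powi s = c powi (int m * (s div int m)) * c powi (s mod int m)"
    using C_nonzero[OF c] by (simp flip: power_int_add)
  also have "c powi (int m * (s div int m)) = 1"
    using C_power_m[OF c] by (simp add: power_int_mult)
  finally show ?thesis by simp
qed

lemma w_power_d_powi_eq_imp_mod_eq:
  assumes "(w ^ d) powi s = (w ^ d) powi t"
  shows "s mod int m = t mod int m"
proof -
  have powi_eq: "(w ^ d) powi u = w ^ (d * nat (u mod int m))" for u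
    using C_powi_mod[OF w_power_d_mem_C, of u] m_pos by (simp add: power_int_def power_mult)
  have less_n: "d * nat (u mod int m) < n" for u
  proof -
    have "nat (u mod int m) < m" using m_pos by (simp add: nat_less_iff)
    then show ?thesis using d_pos d_mult_m by (metis mult_strict_left_mono)
  qed
  from assms have "w ^ (d * nat (s mod int m)) = w ^ (d * nat (t mod int m))"
    by (simp only: powi_eq)
  then have "d * nat (s mod int m) = d * nat (t mod int m)"
    using less_n by (simp add: power_w_eq_iff)
  moreover have "s mod int m \<ge> 0" "t mod int m \<ge> 0" using m_pos by simp_all
  ultimately show ?thesis using d_pos by (simp add: nat_eq_iff2)
qed

lemma mem_cyc_coset_iff: "x \<in> cyc_coset w d i \<longleftrightarrow> (\<exists>c\<in>C. x = c * w ^ i)"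
  by (auto simp: cyc_coset_def C_def mult.commute)

lemma mult_power_w_eq_iff:
  assumes "c \<in> C" "c' \<in> C" "i < d" "j < d"
  shows "c * w ^ i = c' * w ^ j \<longleftrightarrow> c = c' \<and> i = j"
proof
  assume eq: "c * w ^ i = c' * w ^ j"
  obtain k l where "c = w ^ (d * k)" "c' = w ^ (d * l)" using assms(1,2) by (auto simp: mem_C_iff)
  with eq have "w ^ (d * k + i) = w ^ (d * l + j)" by (simp add: power_add)
  then have "(d * k + i) mod n mod d = (d * l + j) mod n mod d" by (simp add: power_w_eq_iff)
  then have "i = j" using assms(3,4) by (simp add: mod_mod_cancel[OF d_dvd_n])
  with eq show "c = c' \<and> i = j" by simp
qed simp

lemma nonzero_eq_mult_power_w: "x \<noteq> 0 \<Longrightarrow> \<exists>c\<in>C. \<exists>i<d. x = c * w ^ i"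
proof -
  assume "x \<noteq> 0"
  then obtain k where "x = w ^ (d * (k div d)) * w ^ (k mod d)"
    using nonzero_eq_power_w by (metis div_mult_mod_eq mult.commute power_add)
  moreover have "w ^ (d * (k div d)) \<in> C" by (auto simp: mem_C_iff)
  moreover have "k mod d < d" using d_pos by simp
  ultimately show ?thesis by blast
qed

lemma beta_bij: "bij_betw (beta w) (C \<times> {..<d}) (UNIV - {0})"
proof (rule bij_betwI')
  show "beta w x = beta w y \<longleftrightarrow> x = y" if "x \<in> C \<times> {..<d}" "y \<in> C \<times> {..<d}" for x y
    using that mult_power_w_eq_iff by auto
  show "beta w x \<in> UNIV - {0}" if "x \<in> C \<times> {..<d}" for x
    using that C_nonzero by auto
  show "\<exists>x\<in>C \<times> {..<d}. y = beta w x" if "y \<in> UNIV - {0}" for y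
    using that nonzero_eq_mult_power_w by fastforce
qed

lemma cidx_mult_power_w: "c \<in> C \<Longrightarrow> i < d \<Longrightarrow> cidx w d (c * w ^ i) = i"
  unfolding cidx_def by (rule the_equality) (auto simp: mem_cyc_coset_iff mult_power_w_eq_iff)

lemma fun_eq_on_cosetsI:
  assumes "f 0 = 0" "g 0 = 0" "\<And>c i. c \<in> C \<Longrightarrow> i < d \<Longrightarrow> f (c * w ^ i) = g (c * w ^ i)"
  shows "f = g"
proof
  fix x show "f x = g x"
    using assms nonzero_eq_mult_power_w[of x] by (cases "x = 0") auto
qed

lemma gen_cyc_map_zero [simp]: "gen_cyc_map w d a r 0 = 0"
  by (simp add: gen_cyc_map_def)

lemma gen_cyc_map_mult_power_w:
  "c \<in> C \<Longrightarrow> i < d \<Longrightarrow> gen_cyc_map w d a r (c * w ^ i) = a i * (c * w ^ i) ^ r i"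
  using C_nonzero by (simp add: gen_cyc_map_def cidx_mult_power_w)

lemma gen_cyc_map_mult_power_w_factor:
  "c \<in> C \<Longrightarrow> i < d \<Longrightarrow> gen_cyc_map w d a r (c * w ^ i) = gen_cyc_map w d a r (w ^ i) * c ^ r i"
  using gen_cyc_map_mult_power_w[of c i] gen_cyc_map_mult_power_w[OF one_mem_C, of i]
  by (simp add: power_mult_distrib mult_ac)

lemma card_cyc_coset: "card (cyc_coset w d i) = card C"
  unfolding cyc_coset_def C_def[symmetric] by (rule card_image) (auto intro: inj_onI)

lemma power_w_mem_cyc_coset: "w ^ i \<in> cyc_coset w d i"
  using one_mem_C by (force simp: mem_cyc_coset_iff)

lemma cyc_coset_eq_iff:
  assumes "i < d" "j < d"
  shows "cyc_coset w d i = cyc_coset w d j \<longleftrightarrow> i = j"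
proof
  assume "cyc_coset w d i = cyc_coset w d j"
  then obtain c where "c \<in> C" "1 * w ^ i = c * w ^ j"
    using power_w_mem_cyc_coset[of i] by (auto simp: mem_cyc_coset_iff)
  then show "i = j" using mult_power_w_eq_iff[OF one_mem_C _ assms] by blast
qed simp

lemma bij_gen_cyc_map_image_cyc_coset:
  assumes bij: "bij (gen_cyc_map w d a r)" and i: "i < d"
  shows "\<exists>j<d. gen_cyc_map w d a r ` cyc_coset w d i = cyc_coset w d j"
proof -
  let ?f = "gen_cyc_map w d a r"
  have "?f (w ^ i) \<noteq> 0"
  proof
    assume "?f (w ^ i) = 0"
    then have "?f (w ^ i) = ?f 0" by simp
    then show False using injD[OF bij_is_inj[OF bij]] by fastforce
  qed
  then obtain c0 j where c0: "c0 \<in> C" "j < d" "?f (w ^ i) = c0 * w ^ j"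
    using nonzero_eq_mult_power_w by blast
  have sub: "?f ` cyc_coset w d i \<subseteq> cyc_coset w d j"
  proof
    fix y assume "y \<in> ?f ` cyc_coset w d i"
    then obtain c where c: "c \<in> C" "y = ?f (c * w ^ i)" by (auto simp: mem_cyc_coset_iff)
    then have "y = (c0 * c ^ r i) * w ^ j"
      using gen_cyc_map_mult_power_w_factor[OF c(1) i] c0(3) by (simp add: mult_ac)
    moreover have "c0 * c ^ r i \<in> C"
      using c0(1) c(1) by (simp add: C_mult_closed C_power_closed)
    ultimately show "y \<in> cyc_coset w d j" by (auto simp: mem_cyc_coset_iff)
  qed
  have "inj_on ?f (cyc_coset w d i)"
    using bij_is_inj[OF bij] by (rule inj_on_subset) simp
  then have "card (?f ` cyc_coset w d i) = card (cyc_coset w d j)"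
    by (simp add: card_image card_cyc_coset)
  with sub have "?f ` cyc_coset w d i = cyc_coset w d j"
    by (intro card_subset_eq) simp_all
  with c0(2) show ?thesis by blast
qed

lemma bij_gen_cyc_map_permutes_cyc_cosets:
  assumes bij: "bij (gen_cyc_map w d a r)"
  shows "\<exists>!\<psi>. \<psi> permutes {..<d} \<and>
    (\<forall>i<d. gen_cyc_map w d a r ` cyc_coset w d i = cyc_coset w d (\<psi> i))"
proof -
  let ?f = "gen_cyc_map w d a r"
  have "\<forall>i. \<exists>j. i < d \<longrightarrow> j < d \<and> ?f ` cyc_coset w d i = cyc_coset w d j"
    using bij_gen_cyc_map_image_cyc_coset[OF bij] by blast
  from choice[OF this] obtain \<phi>
    where \<phi>: "\<forall>i. i < d \<longrightarrow> \<phi> i < d \<and> ?f ` cyc_coset w d i = cyc_coset w d (\<phi> i)"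
    by blast
  define \<psi> where "\<psi> i = (if i < d then \<phi> i else i)" for i
  have \<psi>: "\<psi> i < d" "?f ` cyc_coset w d i = cyc_coset w d (\<psi> i)" if "i < d" for i
    using \<phi> that by (simp_all add: \<psi>_def)
  have inj: "inj_on \<psi> {..<d}"
  proof (rule inj_onI)
    fix i j assume ij: "i \<in> {..<d}" "j \<in> {..<d}" "\<psi> i = \<psi> j"
    then have "?f ` cyc_coset w d i = ?f ` cyc_coset w d j" using \<psi> by simp
    then show "i = j"
      using bij ij by (simp add: bij_def inj_image_eq_iff cyc_coset_eq_iff)
  qed
  moreover have "\<psi> ` {..<d} \<subseteq> {..<d}" using \<psi> by auto
  ultimately have "\<psi> ` {..<d} = {..<d}" by (simp add: endo_inj_surj)
  with inj have perm: "\<psi> permutes {..<d}"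
    by (intro bij_imp_permutes) (simp_all add: bij_betw_def \<psi>_def)
  show ?thesis
  proof (rule ex1I[of _ \<psi>])
    show "\<psi> permutes {..<d} \<and> (\<forall>i<d. ?f ` cyc_coset w d i = cyc_coset w d (\<psi> i))"
      using perm \<psi>(2) by blast
  next
    fix \<psi>' assume \<psi>': "\<psi>' permutes {..<d} \<and> (\<forall>i<d. ?f ` cyc_coset w d i = cyc_coset w d (\<psi>' i))"
    show "\<psi>' = \<psi>"
    proof
      fix i show "\<psi>' i = \<psi> i"
      proof (cases "i < d")
        case True
        then have "cyc_coset w d (\<psi>' i) = cyc_coset w d (\<psi> i)" using \<psi>' \<psi>(2) by metis
        moreover have "\<psi>' i < d" using \<psi>' True by (blast intro: permutes_lessThan_less)
        ultimately show ?thesis using cyc_coset_eq_iff \<psi>(1) True by blast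
      next
        case False
        then show ?thesis using \<psi>' permutes_not_in[of \<psi>' "{..<d}" i] by (simp add: \<psi>_def)
      qed
    qed
  qed
qed

lemma bij_gen_cyc_map_coprime_exponent:
  assumes bij: "bij (gen_cyc_map w d a r)" and j: "j < d"
  shows "coprime (r j) m"
proof -
  define e where "e = gcd (r j) m"
  define m' where "m' = m div e"
  have m_eq: "m = e * m'" and r_eq: "r j = e * (r j div e)" by (simp_all add: e_def m'_def)
  have "m' > 0" using m_eq m_pos by (cases m') auto
  \<comment> \<open>z^(r j) = 1, so injectivity on C_j forces z = 1, i.e. m divides m div e\<close>
  define z where "z = (w ^ d) ^ m'"
  have z: "z \<in> C" unfolding z_def by (rule C_power_closed[OF w_power_d_mem_C])
  have "m' * r j = m * (r j div e)"
    by (subst r_eq, subst m_eq) (simp add: mult_ac)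
  then have "z ^ r j = ((w ^ d) ^ m) ^ (r j div e)"
    unfolding z_def by (simp only: power_mult[symmetric] mult.assoc)
  then have "z ^ r j = 1" using C_power_m[OF w_power_d_mem_C] by simp
  then have "gen_cyc_map w d a r (z * w ^ j) = gen_cyc_map w d a r (1 * w ^ j)"
    using gen_cyc_map_mult_power_w_factor[OF z j] gen_cyc_map_mult_power_w_factor[OF one_mem_C j] by simp
  then have "z * w ^ j = 1 * w ^ j" by (rule injD[OF bij_is_inj[OF bij]])
  then have "z = 1" by simp
  then have "int m' mod int m = 0 mod int m"
    by (intro w_power_d_powi_eq_imp_mod_eq) (simp add: z_def)
  then have "m dvd m'" by (simp flip: of_nat_mod add: dvd_eq_mod_eq_0)
  then have "e * m' \<le> 1 * m'" using \<open>m' > 0\<close> m_eq by (simp add: dvd_imp_le)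
  moreover have "e > 0" using m_pos by (simp add: e_def)
  ultimately have "e = 1" using \<open>m' > 0\<close> by simp
  then show ?thesis by (simp add: e_def coprime_iff_gcd_eq_1)
qed

subsection \<open>The holomorph of C\<close>

lemma hol_map_in_C: "c \<in> C \<Longrightarrow> hol_map C s b c = b * c powi s"
  by (simp add: hol_map_def)

lemma hol_map_notin_C: "c \<notin> C \<Longrightarrow> hol_map C s b c = c"
  by (simp add: hol_map_def)

lemma hol_map_mem_C: "b \<in> C \<Longrightarrow> c \<in> C \<Longrightarrow> hol_map C s b c \<in> C"
  by (simp add: hol_map_in_C C_mult_closed C_powi_closed)

lemma hol_map_comp:
  assumes "b \<in> C" "b' \<in> C"
  shows "hol_map C s b \<circ> hol_map C t b' = hol_map C (t * s) (b * b' powi s)"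
proof
  fix x show "(hol_map C s b \<circ> hol_map C t b') x = hol_map C (t * s) (b * b' powi s) x"
  proof (cases "x \<in> C")
    case True
    then have "(hol_map C s b \<circ> hol_map C t b') x = b * (b' * x powi t) powi s"
      using hol_map_mem_C[OF assms(2) True] by (simp add: hol_map_in_C)
    also have "\<dots> = b * b' powi s * x powi (t * s)"
      by (simp only: power_int_mult_distrib power_int_mult[symmetric] mult.assoc)
    finally show ?thesis using True by (simp add: hol_map_in_C)
  qed (simp add: hol_map_notin_C)
qed

lemma hol_map_one_one: "hol_map C 1 1 = id"
  by (auto simp: hol_map_def)

lemma hol_map_cong:
  assumes "s mod int m = t mod int m"
  shows "hol_map C s b = hol_map C t b"
proof
  fix x show "hol_map C s b x = hol_map C t b x"
    using C_powi_mod[of x s] C_powi_mod[of x t] assms by (simp add: hol_map_def)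
qed

lemma hol_map_eq_imp:
  assumes "b \<in> C" "b' \<in> C" "hol_map C s b = hol_map C t b'"
  shows "b = b' \<and> s mod int m = t mod int m"
proof -
  have "b = b'" using fun_cong[OF assms(3), of 1] one_mem_C by (simp add: hol_map_in_C)
  moreover have "b * (w ^ d) powi s = b * (w ^ d) powi t"
    using fun_cong[OF assms(3), of "w ^ d"] w_power_d_mem_C \<open>b = b'\<close> by (simp add: hol_map_in_C)
  then have "(w ^ d) powi s = (w ^ d) powi t" using C_nonzero[OF assms(1)] by simp
  then have "s mod int m = t mod int m" by (rule w_power_d_powi_eq_imp_mod_eq)
  ultimately show ?thesis ..
qed

lemma mem_Hol_iff: "f \<in> Hol C m \<longleftrightarrow> (\<exists>s b. b \<in> C \<and> coprime s (int m) \<and> f = hol_map C s b)"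
  by (auto simp: Hol_def)

lemma hol_map_mem_Hol: "b \<in> C \<Longrightarrow> coprime s (int m) \<Longrightarrow> hol_map C s b \<in> Hol C m"
  unfolding mem_Hol_iff by blast

lemma Hol_mem_C: "f \<in> Hol C m \<Longrightarrow> c \<in> C \<Longrightarrow> f c \<in> C"
  by (auto simp: mem_Hol_iff hol_map_mem_C)

lemma Hol_notin_C: "f \<in> Hol C m \<Longrightarrow> c \<notin> C \<Longrightarrow> f c = c"
  by (auto simp: mem_Hol_iff hol_map_notin_C)

lemma Hol_comp_closed:
  assumes "f \<in> Hol C m" "g \<in> Hol C m"
  shows "f \<circ> g \<in> Hol C m"
proof -
  obtain s b t b' where b: "b \<in> C" "coprime s (int m)" "f = hol_map C s b"
    and b': "b' \<in> C" "coprime t (int m)" "g = hol_map C t b'"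
    using assms by (auto simp: mem_Hol_iff)
  then have "f \<circ> g = hol_map C (t * s) (b * b' powi s)" by (simp add: hol_map_comp)
  moreover have "b * b' powi s \<in> C" using b(1) b'(1) by (simp add: C_mult_closed C_powi_closed)
  moreover have "coprime (t * s) (int m)" using b(2) b'(2) by simp
  ultimately show ?thesis by (simp add: hol_map_mem_Hol)
qed

lemma id_mem_Hol: "id \<in> Hol C m"
  using hol_map_mem_Hol[OF one_mem_C, of 1] by (simp add: hol_map_one_one)

lemma Hol_right_inverse:
  assumes "f \<in> Hol C m"
  shows "\<exists>g \<in> Hol C m. f \<circ> g = id"
proof -
  obtain s b where b: "b \<in> C" and s: "coprime s (int m)" and f: "f = hol_map C s b"
    using assms by (auto simp: mem_Hol_iff)
  obtain t where t: "[s * t = 1] (mod int m)" using cong_solve_coprime_int[OF s] by blast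
  then have t_coprime: "coprime t (int m)"
    using coprime_iff_invertible_int[of t "int m"] by (metis mult.commute)
  define b' where "b' = b powi (- t)"
  have b': "b' \<in> C" unfolding b'_def using b by (rule C_powi_closed)
  have "int m dvd s * t - 1" using t by (simp add: cong_iff_dvd_diff)
  then have "(1 + - t * s) mod int m = 0 mod int m"
    by (simp add: mod_eq_dvd_iff mult.commute dvd_diff_commute)
  then have "b powi (1 + - t * s) = b powi 0"
    using C_powi_mod[OF b, of "1 + - t * s"] C_powi_mod[OF b, of 0] by simp
  moreover have "b * b' powi s = b powi (1 + - t * s)"
  proof -
    have "b' powi s = b powi (- t * s)" unfolding b'_def by (rule power_int_mult[symmetric])
    moreover have "b powi (1 + - t * s) = b powi 1 * b powi (- t * s)"
      by (rule power_int_add) (simp add: C_nonzero[OF b])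
    ultimately show ?thesis by simp
  qed
  moreover have "hol_map C (t * s) 1 = hol_map C 1 1"
    using t by (intro hol_map_cong) (simp add: cong_def mult.commute)
  ultimately have "f \<circ> hol_map C t b' = id"
    by (simp add: f hol_map_comp[OF b b'] hol_map_one_one)
  moreover have "hol_map C t b' \<in> Hol C m"
    using b' t_coprime by (rule hol_map_mem_Hol)
  ultimately show ?thesis by blast
qed

lemma group_perm_grp_Hol: "group (perm_grp (Hol C m))"
  by (rule group_perm_grpI[OF id_mem_Hol Hol_comp_closed Hol_right_inverse])

lemma subgroup_translations: "subgroup {hol_map C 1 c | c. c \<in> C} (perm_grp (Hol C m))"
proof (rule group.group_incl_imp_subgroup[OF group_perm_grp_Hol])
  let ?T = "{hol_map C 1 c | c. c \<in> C}"
  show "?T \<subseteq> carrier (perm_grp (Hol C m))"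
    by (auto simp: perm_grp_def hol_map_mem_Hol)
  have "hol_map C 1 1 \<in> ?T" using one_mem_C by blast
  then have "id \<in> ?T" by (simp add: hol_map_one_one)
  moreover have "f \<circ> g \<in> ?T" if fg: "f \<in> ?T" "g \<in> ?T" for f g
  proof -
    obtain c c' where "c \<in> C" "c' \<in> C" "f = hol_map C 1 c" "g = hol_map C 1 c'" using fg by blast
    then have "c * c' \<in> C" "f \<circ> g = hol_map C 1 (c * c')" by (simp_all add: C_mult_closed hol_map_comp)
    then show ?thesis by blast
  qed
  moreover have "\<exists>g \<in> ?T. f \<circ> g = id" if f: "f \<in> ?T" for f
  proof -
    obtain c where c: "c \<in> C" "f = hol_map C 1 c" using f by blast
    then have "f \<circ> hol_map C 1 (inverse c) = id"
      using C_nonzero[OF c(1)] by (simp add: hol_map_comp C_inverse_closed hol_map_one_one)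
    then show ?thesis using C_inverse_closed[OF c(1)] by blast
  qed
  ultimately have "group (perm_grp ?T)" by (rule group_perm_grpI)
  then show "group ((perm_grp (Hol C m))\<lparr>carrier := ?T\<rparr>)" by (simp add: perm_grp_def)
qed

lemma hol_param_spec:
  assumes "f \<in> Hol C m"
  shows "fst (hol_param C m f) \<in> {1..m} \<and> snd (hol_param C m f) \<in> C
     \<and> f = hol_map C (int (fst (hol_param C m f))) (snd (hol_param C m f))"
proof -
  obtain s b where b: "b \<in> C" and f: "f = hol_map C s b"
    using assms by (auto simp: mem_Hol_iff)
  define s' where "s' = (if s mod int m = 0 then m else nat (s mod int m))"
  have "0 \<le> s mod int m" "s mod int m < int m" using m_pos by simp_all
  then have s': "s' \<in> {1..m}" "s mod int m = int s' mod int m"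
    by (auto simp: s'_def le_nat_iff nat_le_iff)
  then have "f = hol_map C (int s') b" using f hol_map_cong[OF s'(2)] by simp
  then have "\<exists>p. case p of (s, b) \<Rightarrow> s \<in> {1..m} \<and> b \<in> C \<and> f = hol_map C (int s) b"
    using s'(1) b by (intro exI[of _ "(s', b)"]) simp
  then have "case hol_param C m f of (s, b) \<Rightarrow> s \<in> {1..m} \<and> b \<in> C \<and> f = hol_map C (int s) b"
    unfolding hol_param_def by (rule someI_ex)
  then show ?thesis by (simp add: case_prod_beta)
qed

lemma hol_param_exponent_mod:
  assumes "b \<in> C" "hol_map C s b \<in> Hol C m"
  shows "int (fst (hol_param C m (hol_map C s b))) mod int m = s mod int m"
proof -
  note p = hol_param_spec[OF assms(2)]
  show ?thesis using hol_map_eq_imp[OF conjunct1[OF conjunct2[OF p]] assms(1)] p by simp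
qed

subsection \<open>The isomorphism iota\<close>

lemma mem_GCP_iff:
  "f \<in> GCP w d \<longleftrightarrow> (\<exists>a r. f = gen_cyc_map w d a r \<and> (\<forall>i<d. r i \<in> {1..m}) \<and> bij f)"
  unfolding GCP_def m_def n_def by blast

lemma mem_CP_iff:
  "f \<in> CP w d \<longleftrightarrow>
    (\<exists>a r \<rho>. f = gen_cyc_map w d a r \<and> (\<forall>i<d. r i = \<rho>) \<and> \<rho> \<in> {1..m} \<and> bij f)"
  unfolding CP_def m_def n_def using d_pos by fastforce

lemma mem_FOCP_iff:
  "f \<in> FOCP w d \<longleftrightarrow> (\<exists>a r. f = gen_cyc_map w d a r \<and> (\<forall>i<d. r i = 1) \<and> bij f)"
  unfolding FOCP_def by blast

lemma iota_eq:
  "iota w d (\<psi>, g) = gen_cyc_map w d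
     (\<lambda>i. w powi (int (\<psi> i) - int i * int (fst (hol_param C m (g (\<psi> i))))) * snd (hol_param C m (g (\<psi> i))))
     (\<lambda>i. fst (hol_param C m (g (\<psi> i))))"
  by (simp add: iota.simps C_def m_def n_def Let_def)

lemma iota_zero [simp]: "iota w d x 0 = 0"
  by (cases x) (simp add: iota_eq)

lemma iota_apply:
  assumes x: "(\<psi>, g) \<in> wr_carrier (Hol C m) d" and c: "c \<in> C" and i: "i < d"
  shows "iota w d (\<psi>, g) (c * w ^ i) = g (\<psi> i) c * w ^ \<psi> i"
proof -
  have "\<psi> i < d" using x i by (simp add: mem_wr_carrier_iff permutes_lessThan_less)
  then have "g (\<psi> i) \<in> Hol C m" using x by (simp add: mem_wr_carrier_iff)
  moreover obtain s b where sb: "hol_param C m (g (\<psi> i)) = (s, b)" by fastforce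
  ultimately have "g (\<psi> i) = hol_map C (int s) b" using hol_param_spec[of "g (\<psi> i)"] by simp
  then have g: "g (\<psi> i) c = b * c ^ s" using c by (simp add: hol_map_in_C)
  have pow: "(w ^ i) ^ s = w powi (int i * int s)"
    by (simp only: power_int_mult power_int_of_nat)
  have "iota w d (\<psi>, g) (c * w ^ i) = (w powi (int (\<psi> i) - int i * int s) * b) * (c * w ^ i) ^ s"
    by (simp add: iota_eq gen_cyc_map_mult_power_w[OF c i] sb)
  also have "\<dots> = b * c ^ s * (w powi (int (\<psi> i) - int i * int s) * w powi (int i * int s))"
    by (simp only: pow power_mult_distrib mult_ac)
  also have "w powi (int (\<psi> i) - int i * int s) * w powi (int i * int s) = w powi int (\<psi> i)"
    by (simp flip: power_int_add)
  finally show ?thesis by (simp add: g power_int_of_nat)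
qed

lemma beta_wr_act:
  "g \<in> wr_carrier (Hol C m) d \<Longrightarrow> x \<in> C \<times> {..<d} \<Longrightarrow> beta w (wr_act g x) = iota w d g (beta w x)"
  by (cases g, cases x) (simp add: iota_apply)

lemma iota_wr_mult:
  assumes x: "x \<in> wr_carrier (Hol C m) d" and y: "y \<in> wr_carrier (Hol C m) d"
  shows "iota w d (wr_mult d x y) = iota w d y \<circ> iota w d x"
proof (rule fun_eq_on_cosetsI)
  fix c i assume c: "c \<in> C" and i: "i < d"
  obtain \<sigma> g \<tau> h where xy: "x = (\<sigma>, g)" "y = (\<tau>, h)" by fastforce
  have \<sigma>: "\<sigma> permutes {..<d}" and \<tau>: "\<tau> permutes {..<d}" and gH: "\<forall>i<d. g i \<in> Hol C m"
    using x y by (simp_all add: xy mem_wr_carrier_iff)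
  have \<sigma>i: "\<sigma> i < d" using permutes_lessThan_less[OF \<sigma> i] .
  have xy_eq: "wr_mult d x y = (\<tau> \<circ> \<sigma>, \<lambda>j. if j < d then h j \<circ> g (Hilbert_Choice.inv \<tau> j) else id)"
    by (simp add: xy wr_mult_permutes[OF \<tau>] del: wr_mult.simps)
  have "wr_mult d x y \<in> wr_carrier (Hol C m) d"
    using wr_mult_mem_wr_carrier[OF group_perm_grp_Hol x y] .
  then have "iota w d (wr_mult d x y) (c * w ^ i) = h (\<tau> (\<sigma> i)) (g (\<sigma> i) c) * w ^ \<tau> (\<sigma> i)"
    using iota_apply[OF _ c i] permutes_lessThan_less[OF \<tau> \<sigma>i] permutes_inverses(2)[OF \<tau>]
    by (simp add: xy_eq)
  also have "\<dots> = iota w d y (iota w d x (c * w ^ i))"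
    using iota_apply[OF x[unfolded xy] c i] iota_apply[OF y[unfolded xy] Hol_mem_C[OF gH[rule_format, OF \<sigma>i] c] \<sigma>i]
    by (simp add: xy)
  finally show "iota w d (wr_mult d x y) (c * w ^ i) = (iota w d y \<circ> iota w d x) (c * w ^ i)"
    by simp
qed simp_all

lemma inj_on_iota: "inj_on (iota w d) (wr_carrier (Hol C m) d)"
proof (rule inj_onI)
  fix x y assume x: "x \<in> wr_carrier (Hol C m) d" and y: "y \<in> wr_carrier (Hol C m) d"
    and eq: "iota w d x = iota w d y"
  obtain \<sigma> g \<tau> h where xy: "x = (\<sigma>, g)" "y = (\<tau>, h)" by fastforce
  have \<sigma>: "\<sigma> permutes {..<d}" "\<forall>i<d. g i \<in> Hol C m" "\<forall>i. d \<le> i \<longrightarrow> g i = id"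
    and \<tau>: "\<tau> permutes {..<d}" "\<forall>i<d. h i \<in> Hol C m" "\<forall>i. d \<le> i \<longrightarrow> h i = id"
    using x y by (simp_all add: xy mem_wr_carrier_iff)
  have key: "\<sigma> i = \<tau> i \<and> g (\<sigma> i) c = h (\<tau> i) c" if c: "c \<in> C" and i: "i < d" for c i
  proof -
    have less: "\<sigma> i < d" "\<tau> i < d" using \<sigma>(1) \<tau>(1) i by (simp_all add: permutes_lessThan_less)
    moreover have "g (\<sigma> i) c * w ^ \<sigma> i = h (\<tau> i) c * w ^ \<tau> i"
      using eq iota_apply[OF x[unfolded xy] c i] iota_apply[OF y[unfolded xy] c i] by (simp add: xy)
    moreover have "g (\<sigma> i) c \<in> C" "h (\<tau> i) c \<in> C"
      using \<sigma>(2) \<tau>(2) c less by (simp_all add: Hol_mem_C)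
    ultimately show ?thesis using mult_power_w_eq_iff by blast
  qed
  have "\<sigma> = \<tau>"
  proof
    fix i show "\<sigma> i = \<tau> i"
      using key[OF one_mem_C] permutes_not_in[OF \<sigma>(1)] permutes_not_in[OF \<tau>(1)]
      by (cases "i < d") auto
  qed
  moreover have "g j c = h j c" for j c
  proof (cases "j < d")
    case True
    define i where "i = Hilbert_Choice.inv \<sigma> j"
    have "i < d" "j = \<sigma> i"
      using permutes_lessThan_less[OF permutes_inv[OF \<sigma>(1)] True] permutes_inverses(1)[OF \<sigma>(1)]
      by (simp_all add: i_def)
    then show ?thesis
      using key[of c i] \<open>\<sigma> = \<tau>\<close> True \<sigma>(2) \<tau>(2) by (cases "c \<in> C") (auto simp: Hol_notin_C)
  qed (simp add: \<sigma>(3) \<tau>(3))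
  ultimately show "x = y" by (simp add: xy fun_eq_iff)
qed

lemma one_mem_wr_carrier: "(id, \<lambda>_. id) \<in> wr_carrier (Hol C m) d"
  by (simp add: mem_wr_carrier_iff id_mem_Hol)

lemma iota_one: "iota w d (id, \<lambda>_. id) = id"
  by (rule fun_eq_on_cosetsI) (simp_all add: iota_apply[OF one_mem_wr_carrier])

lemma iota_inverse:
  assumes "x \<in> wr_carrier (Hol C m) d"
  shows "iota w d x \<circ> iota w d (inv\<^bsub>wr_group (Hol C m) d\<^esub> x) = id"
proof -
  interpret G: group "wr_group (Hol C m) d" by (rule group_wr_group[OF group_perm_grp_Hol])
  have x: "x \<in> carrier (wr_group (Hol C m) d)" using assms by (simp add: wr_group_def)
  then have "wr_mult d (inv\<^bsub>wr_group (Hol C m) d\<^esub> x) x = (id, \<lambda>_. id)"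
    using G.l_inv by (simp add: wr_group_def)
  moreover have "inv\<^bsub>wr_group (Hol C m) d\<^esub> x \<in> wr_carrier (Hol C m) d"
    using G.inv_closed[OF x] by (simp add: wr_group_def)
  then have "iota w d (wr_mult d (inv\<^bsub>wr_group (Hol C m) d\<^esub> x) x)
      = iota w d x \<circ> iota w d (inv\<^bsub>wr_group (Hol C m) d\<^esub> x)"
    using assms by (rule iota_wr_mult)
  ultimately show ?thesis by (simp add: iota_one)
qed

lemma bij_iota:
  assumes "x \<in> wr_carrier (Hol C m) d"
  shows "bij (iota w d x)"
proof -
  have "surj (iota w d x)"
    using fun_cong[OF iota_inverse[OF assms]] by (intro surjI) simp
  then show ?thesis using finite_UNIV_surj_inj[OF finite_UNIV] by (simp add: bij_def)
qed

lemma iota_mem_GCP: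
  assumes x: "x \<in> wr_carrier (Hol C m) d"
  shows "iota w d x \<in> GCP w d"
proof -
  obtain \<psi> g where x_eq: "x = (\<psi>, g)" by fastforce
  have "fst (hol_param C m (g (\<psi> i))) \<in> {1..m}" if "i < d" for i
    using x that hol_param_spec by (simp add: x_eq mem_wr_carrier_iff permutes_lessThan_less)
  then show ?thesis
    using bij_iota[OF x] unfolding mem_GCP_iff x_eq iota_eq by blast
qed

lemma iota_inv_formula_eq:
  assumes bij: "bij (gen_cyc_map w d a r)" and \<psi>: "\<psi> permutes {..<d}"
    and img: "\<forall>i<d. gen_cyc_map w d a r ` cyc_coset w d i = cyc_coset w d (\<psi> i)"
  shows "iota_inv_formula w d \<psi> a r \<in> wr_carrier (Hol C m) d
    \<and> iota w d (iota_inv_formula w d \<psi> a r) = gen_cyc_map w d a r"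
proof -
  let ?f = "gen_cyc_map w d a r"
  define h where "h = snd (iota_inv_formula w d \<psi> a r)"
  have formula: "iota_inv_formula w d \<psi> a r = (\<psi>, h)"
    by (simp add: h_def iota_inv_formula_def)
  have h_at: "\<exists>b\<in>C. h (\<psi> j) = hol_map C (int (r j)) b \<and> ?f (w ^ j) = b * w ^ \<psi> j"
    if j: "j < d" for j
  proof -
    have "?f (w ^ j) \<in> cyc_coset w d (\<psi> j)" using img j power_w_mem_cyc_coset by blast
    then obtain b where b: "b \<in> C" "?f (w ^ j) = b * w ^ \<psi> j" by (auto simp: mem_cyc_coset_iff)
    have "?f (w ^ j) = a j * w ^ (j * r j)"
      using gen_cyc_map_mult_power_w[OF one_mem_C j, of a r] by (simp add: power_mult)
    then have "w powi (int (r j) * int j - int (\<psi> j)) * a j = b"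
      using b(2) by (simp add: power_int_diff power_int_of_nat flip: of_nat_mult) (simp add: field_simps)
    moreover have "inv_into {..<d} \<psi> (\<psi> j) = j"
      using inv_into_f_f[OF permutes_inj_on[OF \<psi>]] j by simp
    ultimately have "h (\<psi> j) = hol_map C (int (r j)) b"
      using permutes_lessThan_less[OF \<psi> j] by (simp add: h_def iota_inv_formula_def C_def)
    with b show ?thesis by blast
  qed
  have "h i \<in> Hol C m" if i: "i < d" for i
  proof -
    define j where "j = Hilbert_Choice.inv \<psi> i"
    have j: "j < d" "\<psi> j = i"
      using permutes_lessThan_less[OF permutes_inv[OF \<psi>] i] permutes_inverses(1)[OF \<psi>]
      by (simp_all add: j_def)
    then obtain b where "b \<in> C" "h i = hol_map C (int (r j)) b" using h_at[OF j(1)] by blast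
    moreover have "coprime (int (r j)) (int m)"
      using bij_gen_cyc_map_coprime_exponent[OF bij j(1)] by simp
    ultimately show ?thesis by (simp add: hol_map_mem_Hol)
  qed
  then have carrier: "(\<psi>, h) \<in> wr_carrier (Hol C m) d"
    using \<psi> by (simp add: mem_wr_carrier_iff h_def iota_inv_formula_def)
  have "iota w d (\<psi>, h) = ?f"
  proof (rule fun_eq_on_cosetsI)
    fix c j assume c: "c \<in> C" and j: "j < d"
    obtain b where b: "b \<in> C" "h (\<psi> j) = hol_map C (int (r j)) b" "?f (w ^ j) = b * w ^ \<psi> j"
      using h_at[OF j] by blast
    show "iota w d (\<psi>, h) (c * w ^ j) = ?f (c * w ^ j)"
      using iota_apply[OF carrier c j] gen_cyc_map_mult_power_w_factor[OF c j] b c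
      by (simp add: hol_map_in_C power_int_of_nat mult_ac)
  qed simp_all
  with carrier show ?thesis by (simp add: formula)
qed

lemma GCP_subset_iota_image: "GCP w d \<subseteq> iota w d ` wr_carrier (Hol C m) d"
proof
  fix f assume "f \<in> GCP w d"
  then obtain a r where f: "f = gen_cyc_map w d a r" and bij: "bij (gen_cyc_map w d a r)"
    by (auto simp: mem_GCP_iff)
  then obtain \<psi> where "\<psi> permutes {..<d}"
    "\<forall>i<d. gen_cyc_map w d a r ` cyc_coset w d i = cyc_coset w d (\<psi> i)"
    using bij_gen_cyc_map_permutes_cyc_cosets by blast
  then show "f \<in> iota w d ` wr_carrier (Hol C m) d"
    using iota_inv_formula_eq[OF bij] f by (metis image_eqI)
qed

lemma bij_betw_iota: "bij_betw (iota w d) (wr_carrier (Hol C m) d) (GCP w d)"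
  using inj_on_iota iota_mem_GCP GCP_subset_iota_image by (auto simp: bij_betw_def)

lemma iota_iso: "iota w d \<in> iso (wr_group (Hol C m) d) (perm_grp (GCP w d))"
  using bij_betw_iota iota_mem_GCP iota_wr_mult
  by (auto simp: iso_def hom_def wr_group_def perm_grp_def)

lemma group_perm_grp_GCP: "group (perm_grp (GCP w d))"
proof (rule group_perm_grpI)
  show "id \<in> GCP w d" using iota_mem_GCP[OF one_mem_wr_carrier] by (simp add: iota_one)
next
  fix f g assume "f \<in> GCP w d" "g \<in> GCP w d"
  then obtain x y where "x \<in> wr_carrier (Hol C m) d" "y \<in> wr_carrier (Hol C m) d"
    "f = iota w d x" "g = iota w d y"
    using GCP_subset_iota_image by blast
  then show "f \<circ> g \<in> GCP w d"
    using iota_mem_GCP wr_mult_mem_wr_carrier[OF group_perm_grp_Hol] iota_wr_mult by metis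
next
  fix f assume "f \<in> GCP w d"
  then obtain x where x: "x \<in> wr_carrier (Hol C m) d" "f = iota w d x"
    using GCP_subset_iota_image by blast
  interpret G: group "wr_group (Hol C m) d" by (rule group_wr_group[OF group_perm_grp_Hol])
  have "inv\<^bsub>wr_group (Hol C m) d\<^esub> x \<in> wr_carrier (Hol C m) d"
    using G.inv_closed x(1) by (simp add: wr_group_def)
  then show "\<exists>g\<in>GCP w d. f \<circ> g = id"
    using iota_inverse[OF x(1)] iota_mem_GCP x(2) by blast
qed

lemma the_inv_iota:
  assumes "bij (gen_cyc_map w d a r)" "\<psi> permutes {..<d}"
    "\<forall>i<d. gen_cyc_map w d a r ` cyc_coset w d i = cyc_coset w d (\<psi> i)"
  shows "the_inv_into (wr_carrier (Hol C m) d) (iota w d) (gen_cyc_map w d a r)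
    = iota_inv_formula w d \<psi> a r"
  using iota_inv_formula_eq[OF assms] by (intro the_inv_into_f_eq[OF inj_on_iota]) simp_all

lemma the_inv_iota_eq_iota_inv_formula:
  "\<forall>a r. (\<forall>i<d. r i \<in> {1..m}) \<and> bij (gen_cyc_map w d a r) \<longrightarrow>
      (\<exists>!\<psi>. \<psi> permutes {..<d} \<and>
         (\<forall>i<d. gen_cyc_map w d a r ` cyc_coset w d i = cyc_coset w d (\<psi> i)))
    \<and> (\<forall>\<psi>. \<psi> permutes {..<d} \<and>
         (\<forall>i<d. gen_cyc_map w d a r ` cyc_coset w d i = cyc_coset w d (\<psi> i)) \<longrightarrow>
       the_inv_into (wr_carrier (Hol C m) d) (iota w d) (gen_cyc_map w d a r)
         = iota_inv_formula w d \<psi> a r)"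
proof (intro allI impI conjI)
  fix a r assume "(\<forall>i<d. r i \<in> {1..m}) \<and> bij (gen_cyc_map w d a r)"
  then show "\<exists>!\<psi>. \<psi> permutes {..<d} \<and>
      (\<forall>i<d. gen_cyc_map w d a r ` cyc_coset w d i = cyc_coset w d (\<psi> i))"
    by (intro bij_gen_cyc_map_permutes_cyc_cosets) simp
next
  fix a r \<psi> assume "(\<forall>i<d. r i \<in> {1..m}) \<and> bij (gen_cyc_map w d a r)"
    "\<psi> permutes {..<d} \<and> (\<forall>i<d. gen_cyc_map w d a r ` cyc_coset w d i = cyc_coset w d (\<psi> i))"
  then show "the_inv_into (wr_carrier (Hol C m) d) (iota w d) (gen_cyc_map w d a r)
      = iota_inv_formula w d \<psi> a r"
    by (intro the_inv_iota) simp_all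
qed

lemma iota_component_eq_hol_map:
  assumes x: "(\<psi>, g) \<in> wr_carrier (Hol C m) d" and eq: "iota w d (\<psi>, g) = gen_cyc_map w d a r"
    and i: "i < d"
  shows "g (\<psi> i) = hol_map C (int (r i)) (g (\<psi> i) 1)"
proof
  fix z show "g (\<psi> i) z = hol_map C (int (r i)) (g (\<psi> i) 1) z"
  proof (cases "z \<in> C")
    case True
    have "g (\<psi> i) z * w ^ \<psi> i = gen_cyc_map w d a r (w ^ i) * z ^ r i"
      using iota_apply[OF x True i] gen_cyc_map_mult_power_w_factor[OF True i] by (simp add: eq)
    also have "gen_cyc_map w d a r (w ^ i) = g (\<psi> i) 1 * w ^ \<psi> i"
      using iota_apply[OF x one_mem_C i] by (simp add: eq)
    finally have "g (\<psi> i) z = g (\<psi> i) 1 * z ^ r i" by (simp add: mult_ac)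
    then show ?thesis using True by (simp add: hol_map_in_C power_int_of_nat)
  next
    case False
    have "\<psi> i < d" using x i by (simp add: mem_wr_carrier_iff permutes_lessThan_less)
    then show ?thesis using x False by (simp add: mem_wr_carrier_iff Hol_notin_C hol_map_notin_C)
  qed
qed

lemma iota_eq_constant_exponent_components:
  assumes x: "(\<psi>, g) \<in> wr_carrier (Hol C m) d" and eq: "iota w d (\<psi>, g) = gen_cyc_map w d a r"
    and r: "\<forall>i<d. r i = \<rho>"
  shows "coprime (int \<rho>) (int m) \<and> (\<forall>j<d. g j 1 \<in> C \<and> g j = hol_map C (int \<rho>) (g j 1))"
proof -
  have \<psi>: "\<psi> permutes {..<d}" and gH: "\<forall>j<d. g j \<in> Hol C m"
    using x by (simp_all add: mem_wr_carrier_iff)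
  have "coprime (r 0) m"
    using bij_gen_cyc_map_coprime_exponent[OF _ d_pos] bij_iota[OF x] by (simp add: eq)
  moreover have "g j 1 \<in> C \<and> g j = hol_map C (int \<rho>) (g j 1)" if j: "j < d" for j
  proof -
    define i where "i = Hilbert_Choice.inv \<psi> j"
    have i: "i < d" "\<psi> i = j"
      using permutes_lessThan_less[OF permutes_inv[OF \<psi>] j] permutes_inverses(1)[OF \<psi>]
      by (simp_all add: i_def)
    then show ?thesis
      using iota_component_eq_hol_map[OF x eq i(1)] r Hol_mem_C gH j one_mem_C by simp
  qed
  ultimately show ?thesis using r d_pos by simp
qed

lemma iota_components_constant_exponent:
  assumes \<psi>: "\<psi> permutes {..<d}" and s: "coprime s (int m)"
    and g: "\<forall>i<d. b i \<in> C \<and> g i = hol_map C s (b i)" and g_out: "\<forall>i. d \<le> i \<longrightarrow> g i = id"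
  shows "(\<psi>, g) \<in> wr_carrier (Hol C m) d \<and> (\<exists>a r \<rho>. \<rho> \<in> {1..m} \<and> int \<rho> mod int m = s mod int m
    \<and> (\<forall>i<d. r i = \<rho>) \<and> iota w d (\<psi>, g) = gen_cyc_map w d a r)"
proof -
  have x: "(\<psi>, g) \<in> wr_carrier (Hol C m) d"
    using \<psi> g g_out s by (simp add: mem_wr_carrier_iff hol_map_mem_Hol)
  define R where "R = (\<lambda>i. fst (hol_param C m (g (\<psi> i))))"
  have R: "R i \<in> {1..m} \<and> int (R i) mod int m = s mod int m" if i: "i < d" for i
  proof -
    have "\<psi> i < d" using permutes_lessThan_less[OF \<psi> i] .
    then have "b (\<psi> i) \<in> C" "g (\<psi> i) = hol_map C s (b (\<psi> i))" "g (\<psi> i) \<in> Hol C m"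
      using g x by (simp_all add: mem_wr_carrier_iff)
    then show ?thesis using hol_param_spec[of "g (\<psi> i)"] hol_param_exponent_mod[of "b (\<psi> i)" s]
      by (simp add: R_def)
  qed
  have "R i = R 0" if "i < d" for i
    using R[OF that] R[OF d_pos] eq_if_mod_eq_atLeastAtMost[of "R i" m "R 0"] by (simp flip: of_nat_mod)
  moreover have "iota w d (\<psi>, g) = gen_cyc_map w d
     (\<lambda>i. w powi (int (\<psi> i) - int i * int (R i)) * snd (hol_param C m (g (\<psi> i)))) R"
    by (simp add: iota_eq R_def)
  ultimately show ?thesis using x R[OF d_pos] by blast
qed

lemma CP_preimage:
  "{x \<in> wr_carrier (Hol C m) d. iota w d x \<in> CP w d}
    = {(\<psi>, g). \<psi> permutes {..<d} \<and>
        (\<exists>s::int. \<exists>b. coprime s (int m) \<and> (\<forall>i<d. b i \<in> C \<and> g i = hol_map C s (b i)))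
        \<and> (\<forall>i. d \<le> i \<longrightarrow> g i = id)}" (is "?L = ?R")
proof (rule Set.set_eqI, rule iffI)
  fix x assume "x \<in> ?L"
  then obtain \<psi> g a r \<rho> where x: "x = (\<psi>, g)" "(\<psi>, g) \<in> wr_carrier (Hol C m) d"
    and eq: "iota w d (\<psi>, g) = gen_cyc_map w d a r" "\<forall>i<d. r i = \<rho>"
    by (cases x) (auto simp: mem_CP_iff)
  then show "x \<in> ?R"
    using iota_eq_constant_exponent_components[OF x(2) eq]
    by (auto simp: mem_wr_carrier_iff intro!: exI[of _ "int \<rho>"] exI[of _ "\<lambda>j. g j 1"])
next
  fix x assume "x \<in> ?R"
  then obtain \<psi> g s b where x: "x = (\<psi>, g)" "\<psi> permutes {..<d}" "coprime s (int m)"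
    "\<forall>i<d. b i \<in> C \<and> g i = hol_map C s (b i)" "\<forall>i. d \<le> i \<longrightarrow> g i = id"
    by blast
  from iota_components_constant_exponent[OF x(2-5)] obtain a r \<rho> where
    carrier: "(\<psi>, g) \<in> wr_carrier (Hol C m) d" and "\<rho> \<in> {1..m}" "\<forall>i<d. r i = \<rho>"
    "iota w d (\<psi>, g) = gen_cyc_map w d a r"
    by blast
  then have "iota w d (\<psi>, g) \<in> CP w d"
    unfolding mem_CP_iff using bij_iota[OF carrier] by blast
  then show "x \<in> ?L" using carrier x(1) by simp
qed

lemma FOCP_preimage:
  "{x \<in> wr_carrier (Hol C m) d. iota w d x \<in> FOCP w d}
    = {(\<psi>, g). \<psi> permutes {..<d} \<and>
        (\<exists>b. \<forall>i<d. b i \<in> C \<and> g i = hol_map C 1 (b i)) \<and> (\<forall>i. d \<le> i \<longrightarrow> g i = id)}"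
    (is "?L = ?R")
proof (rule Set.set_eqI, rule iffI)
  fix x assume "x \<in> ?L"
  then obtain \<psi> g a r where x: "x = (\<psi>, g)" "(\<psi>, g) \<in> wr_carrier (Hol C m) d"
    and eq: "iota w d (\<psi>, g) = gen_cyc_map w d a r" "\<forall>i<d. r i = 1"
    by (cases x) (auto simp: mem_FOCP_iff)
  then show "x \<in> ?R"
    using iota_eq_constant_exponent_components[OF x(2) eq]
    by (auto simp: mem_wr_carrier_iff intro!: exI[of _ "\<lambda>j. g j 1"])
next
  fix x assume "x \<in> ?R"
  then obtain \<psi> g b where x: "x = (\<psi>, g)" "\<psi> permutes {..<d}"
    "\<forall>i<d. b i \<in> C \<and> g i = hol_map C 1 (b i)" "\<forall>i. d \<le> i \<longrightarrow> g i = id"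
    by blast
  from iota_components_constant_exponent[OF x(2) _ x(3,4)] obtain a r \<rho> where
    carrier: "(\<psi>, g) \<in> wr_carrier (Hol C m) d"
    and \<rho>: "\<rho> \<in> {1..m}" "int \<rho> mod int m = 1 mod int m"
    and r: "\<forall>i<d. r i = \<rho>" "iota w d (\<psi>, g) = gen_cyc_map w d a r"
    by auto
  have "int (\<rho> mod m) = int (1 mod m)" using \<rho>(2) by (simp only: zmod_int of_nat_1)
  then have "\<rho> mod m = 1 mod m" by (simp only: of_nat_eq_iff)
  moreover have "1 \<in> {1..m}" using m_pos by simp
  ultimately have "\<rho> = 1" using eq_if_mod_eq_atLeastAtMost[OF \<rho>(1)] by blast
  then have "iota w d (\<psi>, g) \<in> FOCP w d"
    unfolding mem_FOCP_iff using r bij_iota[OF carrier] by blast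
  then show "x \<in> ?L" using carrier x(1) by simp
qed

lemma wr_carrier_translations:
  "wr_carrier {hol_map C 1 c | c. c \<in> C} d
    = {(\<psi>, g). \<psi> permutes {..<d} \<and>
        (\<exists>b. \<forall>i<d. b i \<in> C \<and> g i = hol_map C 1 (b i)) \<and> (\<forall>i. d \<le> i \<longrightarrow> g i = id)}"
proof -
  have translation_iff: "f \<in> {hol_map C 1 c | c. c \<in> C} \<longleftrightarrow> f 1 \<in> C \<and> f = hol_map C 1 (f 1)" for f
    using one_mem_C by (auto simp: hol_map_in_C)
  show ?thesis
    unfolding wr_carrier_def translation_iff
    by (auto simp: hol_map_in_C one_mem_C intro!: exI[of _ "\<lambda>j. g j 1" for g])
qed

end

theorem theorem1:
  fixes w :: "'a::{field,finite}" and d :: nat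
  defines "m \<equiv> (card (UNIV :: 'a set) - 1) div d"
      and "C \<equiv> (subgrpC d :: 'a set)"
  assumes "0 < d" and "d dvd card (UNIV :: 'a set) - 1" and "primitive_root w"
  shows "bij_betw (beta w) (C \<times> {..<d}) (UNIV - {0})
    \<and> group (wr_group (Hol C m) d) \<and> group (perm_grp (GCP w d))
    \<and> iota w d \<in> iso (wr_group (Hol C m) d) (perm_grp (GCP w d))
    \<and> (\<forall>g \<in> wr_carrier (Hol C m) d. \<forall>x \<in> C \<times> {..<d}.
          beta w (wr_act g x) = iota w d g (beta w x))
    \<and> (\<forall>a r. (\<forall>i<d. r i \<in> {1..m}) \<and> bij (gen_cyc_map w d a r) \<longrightarrow>
          (\<exists>!\<psi>. \<psi> permutes {..<d} \<and>
               (\<forall>i<d. gen_cyc_map w d a r ` cyc_coset w d i = cyc_coset w d (\<psi> i)))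
        \<and> (\<forall>\<psi>. \<psi> permutes {..<d} \<and>
               (\<forall>i<d. gen_cyc_map w d a r ` cyc_coset w d i = cyc_coset w d (\<psi> i)) \<longrightarrow>
             the_inv_into (wr_carrier (Hol C m) d) (iota w d) (gen_cyc_map w d a r)
               = iota_inv_formula w d \<psi> a r))
    \<and> {x \<in> wr_carrier (Hol C m) d. iota w d x \<in> CP w d}
        = {(\<psi>, g). \<psi> permutes {..<d} \<and>
             (\<exists>s::int. \<exists>b. coprime s (int m) \<and> (\<forall>i<d. b i \<in> C \<and> g i = hol_map C s (b i)))
             \<and> (\<forall>i. d \<le> i \<longrightarrow> g i = id)}
    \<and> {x \<in> wr_carrier (Hol C m) d. iota w d x \<in> FOCP w d}
        = {(\<psi>, g). \<psi> permutes {..<d} \<and>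
             (\<exists>b. \<forall>i<d. b i \<in> C \<and> g i = hol_map C 1 (b i)) \<and> (\<forall>i. d \<le> i \<longrightarrow> g i = id)}
    \<and> {x \<in> wr_carrier (Hol C m) d. iota w d x \<in> FOCP w d}
        = wr_carrier {hol_map C 1 c | c. c \<in> C} d
    \<and> subgroup (wr_carrier {hol_map C 1 c | c. c \<in> C} d) (wr_group (Hol C m) d)"
proof -
  interpret cyclotomic_cosets w d "card (UNIV :: 'a set) - 1" m C
    by unfold_locales (use assms in simp_all)
  have action: "\<forall>g \<in> wr_carrier (Hol C m) d. \<forall>x \<in> C \<times> {..<d}.
      beta w (wr_act g x) = iota w d g (beta w x)"
    using beta_wr_act by blast
  show ?thesis
    using beta_bij group_wr_group[OF group_perm_grp_Hol] group_perm_grp_GCP iota_iso action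
      the_inv_iota_eq_iota_inv_formula CP_preimage FOCP_preimage
      FOCP_preimage[unfolded wr_carrier_translations[symmetric]]
      subgroup_wr_carrier[OF group_perm_grp_Hol subgroup_translations]
    by (intro conjI) assumption+
qed

end
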